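(* For every $n\ge2$ there is a locally finite variety which is $n$-Gumm but not $(n-1)$-Gumm, and there is a locally finite variety which is $n$-directed-distributive but not $(n-1)$-directed-distributive. For every $n\ge4$ there is a locally finite variety which is $n$-directed with alvin heads (in particular two-headed $n$-directed Gumm) but is neither $(n-1)$-directed with alvin heads nor two-headed $(n-1)$-directed Gumm.
   Context: Gumm terms: ternary $t_0,\dots,t_n$ with $t_0(x,y,z)=x$, $t_n(x,y,z)=z$, $t_h(x,y,x)=x$ for $2\le h\le n$ (not required for $h=1$), $t_h(x,z,z)=t_{h+1}(x,z,z)$ for even $h$ and $t_h(x,x,z)=t_{h+1}(x,x,z)$ for odd $h$ ($0\le h<n$); $n$-Gumm means having such $t_0,\dots,t_n$. Directed J\'onsson terms: $t_0(x,y,z)=x$, $t_n(x,y,z)=z$, $t_h(x,y,x)=x$ for all $h$, $t_h(x,z,z)=t_{h+1}(x,x,z)$ for $0\le h<n$; $n$-directed-distributive means having such $t_0,\dots,t_n$. For $k\ge4$, two-headed $k$-directed Gumm terms are ternary $p,t_2,\dots,t_{k-2},q$ with $t_h(x,y,x)=x$ ($2\le h\le k-2$), $p(x,z,z)=x$, $p(x,x,z)=t_2(x,x,z)$, $t_h(x,z,z)=t_{h+1}(x,x,z)$ ($2\le h<k-2$), $t_{k-2}(x,z,z)=q(x,z,z)$, $q(x,x,z)=z$; a variety with such terms is two-headed $k$-directed Gumm, and if moreover $p(x,y,x)=x=q(x,y,x)$ it is $k$-directed with alvin heads. These two notions are defined only for $k\ge4$ (so for $n=4$ the negative assertions are vacuous).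 *)

theory Defs
  imports Main
begin

text \<open>A signature is given by an arity function ar on operation symbols (nat).
Variables are indexed by nat; ternary terms use variables 0,1,2 (= x,y,z).\<close>

datatype trm = V nat | F nat "trm list"

fun wf :: "(nat \<Rightarrow> nat) \<Rightarrow> trm \<Rightarrow> bool" where
  "wf ar (V i) = True"
| "wf ar (F f ts) = (length ts = ar f \<and> (\<forall>t\<in>set ts. wf ar t))"

fun vars :: "trm \<Rightarrow> nat set" where
  "vars (V i) = {i}"
| "vars (F f ts) = (\<Union>t\<in>set ts. vars t)"

fun subst :: "(nat \<Rightarrow> trm) \<Rightarrow> trm \<Rightarrow> trm" where
  "subst \<sigma> (V i) = \<sigma> i"
| "subst \<sigma> (F f ts) = F f (map (subst \<sigma>) ts)"

text \<open>A variety is presented by a signature ar and a set Sigma of well-formed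
identities; it satisfies an identity iff the identity is derivable in
equational logic (Birkhoff's completeness theorem).\<close>

definition variety :: "(nat \<Rightarrow> nat) \<Rightarrow> (trm \<times> trm) set \<Rightarrow> bool" where
  "variety ar \<Sigma> \<longleftrightarrow> (\<forall>(s,t)\<in>\<Sigma>. wf ar s \<and> wf ar t)"

inductive deriv :: "(nat \<Rightarrow> nat) \<Rightarrow> (trm \<times> trm) set \<Rightarrow> trm \<Rightarrow> trm \<Rightarrow> bool"
  for ar \<Sigma> where
  ax: "(s, t) \<in> \<Sigma> \<Longrightarrow> deriv ar \<Sigma> s t"
| refl: "wf ar t \<Longrightarrow> deriv ar \<Sigma> t t"
| sym: "deriv ar \<Sigma> s t \<Longrightarrow> deriv ar \<Sigma> t s"
| trans: "deriv ar \<Sigma> s t \<Longrightarrow> deriv ar \<Sigma> t u \<Longrightarrow> deriv ar \<Sigma> s u"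
| cong: "length ss = ar f \<Longrightarrow> list_all2 (deriv ar \<Sigma>) ss ts \<Longrightarrow>
         deriv ar \<Sigma> (F f ss) (F f ts)"
| inst: "deriv ar \<Sigma> s t \<Longrightarrow> (\<forall>i. wf ar (\<sigma> i)) \<Longrightarrow>
         deriv ar \<Sigma> (subst \<sigma> s) (subst \<sigma> t)"

definition locally_finite :: "(nat \<Rightarrow> nat) \<Rightarrow> (trm \<times> trm) set \<Rightarrow> bool" where
  "locally_finite ar \<Sigma> \<longleftrightarrow>
     (\<forall>k. finite ({t. wf ar t \<and> vars t \<subseteq> {..<k}} // {(s, t). deriv ar \<Sigma> s t}))"

definition ternary :: "(nat \<Rightarrow> nat) \<Rightarrow> trm \<Rightarrow> bool" where
  "ternary ar t \<longleftrightarrow> wf ar t \<and> vars t \<subseteq> {0, 1, 2}"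

definition app3 :: "trm \<Rightarrow> trm \<Rightarrow> trm \<Rightarrow> trm \<Rightarrow> trm" where
  "app3 t a b c = subst (\<lambda>i. if i = 0 then a else if i = 1 then b else if i = 2 then c else V i) t"

abbreviation "vx \<equiv> V 0"
abbreviation "vy \<equiv> V 1"
abbreviation "vz \<equiv> V 2"

definition gumm :: "(nat \<Rightarrow> nat) \<Rightarrow> (trm \<times> trm) set \<Rightarrow> nat \<Rightarrow> bool" where
  "gumm ar \<Sigma> n \<longleftrightarrow> (\<exists>t :: nat \<Rightarrow> trm.
     (\<forall>h\<le>n. ternary ar (t h))
   \<and> deriv ar \<Sigma> (app3 (t 0) vx vy vz) vx
   \<and> deriv ar \<Sigma> (app3 (t n) vx vy vz) vz
   \<and> (\<forall>h. 2 \<le> h \<and> h \<le> n \<longrightarrow> deriv ar \<Sigma> (app3 (t h) vx vy vx) vx)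
   \<and> (\<forall>h<n. even h \<longrightarrow> deriv ar \<Sigma> (app3 (t h) vx vz vz) (app3 (t (Suc h)) vx vz vz))
   \<and> (\<forall>h<n. odd h \<longrightarrow> deriv ar \<Sigma> (app3 (t h) vx vx vz) (app3 (t (Suc h)) vx vx vz)))"

definition directed_distributive :: "(nat \<Rightarrow> nat) \<Rightarrow> (trm \<times> trm) set \<Rightarrow> nat \<Rightarrow> bool" where
  "directed_distributive ar \<Sigma> n \<longleftrightarrow> (\<exists>t :: nat \<Rightarrow> trm.
     (\<forall>h\<le>n. ternary ar (t h))
   \<and> deriv ar \<Sigma> (app3 (t 0) vx vy vz) vx
   \<and> deriv ar \<Sigma> (app3 (t n) vx vy vz) vz
   \<and> (\<forall>h\<le>n. deriv ar \<Sigma> (app3 (t h) vx vy vx) vx)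
   \<and> (\<forall>h<n. deriv ar \<Sigma> (app3 (t h) vx vz vz) (app3 (t (Suc h)) vx vx vz)))"

definition two_headed_gumm_terms ::
    "(nat \<Rightarrow> nat) \<Rightarrow> (trm \<times> trm) set \<Rightarrow> nat \<Rightarrow> trm \<Rightarrow> (nat \<Rightarrow> trm) \<Rightarrow> trm \<Rightarrow> bool" where
  "two_headed_gumm_terms ar \<Sigma> k p t q \<longleftrightarrow>
     ternary ar p \<and> ternary ar q \<and> (\<forall>h. 2 \<le> h \<and> h \<le> k - 2 \<longrightarrow> ternary ar (t h))
   \<and> (\<forall>h. 2 \<le> h \<and> h \<le> k - 2 \<longrightarrow> deriv ar \<Sigma> (app3 (t h) vx vy vx) vx)
   \<and> deriv ar \<Sigma> (app3 p vx vz vz) vx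
   \<and> deriv ar \<Sigma> (app3 p vx vx vz) (app3 (t 2) vx vx vz)
   \<and> (\<forall>h. 2 \<le> h \<and> h < k - 2 \<longrightarrow> deriv ar \<Sigma> (app3 (t h) vx vz vz) (app3 (t (Suc h)) vx vx vz))
   \<and> deriv ar \<Sigma> (app3 (t (k - 2)) vx vz vz) (app3 q vx vz vz)
   \<and> deriv ar \<Sigma> (app3 q vx vx vz) vz"

definition two_headed_directed_gumm :: "(nat \<Rightarrow> nat) \<Rightarrow> (trm \<times> trm) set \<Rightarrow> nat \<Rightarrow> bool" where
  "two_headed_directed_gumm ar \<Sigma> k \<longleftrightarrow> 4 \<le> k \<and> (\<exists>p t q. two_headed_gumm_terms ar \<Sigma> k p t q)"

definition directed_alvin_heads :: "(nat \<Rightarrow> nat) \<Rightarrow> (trm \<times> trm) set \<Rightarrow> nat \<Rightarrow> bool" where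
  "directed_alvin_heads ar \<Sigma> k \<longleftrightarrow> 4 \<le> k \<and> (\<exists>p t q. two_headed_gumm_terms ar \<Sigma> k p t q
     \<and> deriv ar \<Sigma> (app3 p vx vy vx) vx \<and> deriv ar \<Sigma> (app3 q vx vy vx) vx)"

end

(*
  The witnesses are the varieties generated by one finite algebra on the chain
  0 < 1 < ... < N, with ternary basic operations f(x,y,x) = x that otherwise move
  x towards z, stopping at a threshold A f if y = z and B f if y <> z.  Suitable
  thresholds make the basic operations themselves a chain of N + 1 Gumm, directed
  Jonsson or two-headed terms.

  If A f and B f always differ by at most 1, every term operation t preserves two
  relations which force t(0,0,N) <= t(0,N,N) + 1 and, when t(0,N,0) = 0, also
  t(0,N,N) <= t(0,0,N) + 1.  Along a chain of N terms of the required shape the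
  values at (0,0,N) and (0,N,N) then start at 0 and rise by at most 1 per link,
  so they cannot reach N at the end.
*)

theory Submission
  imports Defs "HOL-Library.FuncSet"
begin

fun eval_trm :: "(nat \<Rightarrow> 'a list \<Rightarrow> 'a) \<Rightarrow> (nat \<Rightarrow> 'a) \<Rightarrow> trm \<Rightarrow> 'a" where
  "eval_trm I \<rho> (V i) = \<rho> i"
| "eval_trm I \<rho> (F f ts) = I f (map (eval_trm I \<rho>) ts)"

definition closed_under :: "(nat \<Rightarrow> nat) \<Rightarrow> (nat \<Rightarrow> 'a list \<Rightarrow> 'a) \<Rightarrow> 'a set \<Rightarrow> bool" where
  "closed_under ar I U \<longleftrightarrow> (\<forall>f xs. length xs = ar f \<longrightarrow> set xs \<subseteq> U \<longrightarrow> I f xs \<in> U)"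

definition eq_theory :: "(nat \<Rightarrow> nat) \<Rightarrow> (nat \<Rightarrow> 'a list \<Rightarrow> 'a) \<Rightarrow> 'a set \<Rightarrow> (trm \<times> trm) set" where
  "eq_theory ar I U = {(s, t). wf ar s \<and> wf ar t \<and>
     (\<forall>\<rho>. (\<forall>i. \<rho> i \<in> U) \<longrightarrow> eval_trm I \<rho> s = eval_trm I \<rho> t)}"

lemma eval_trm_subst: "eval_trm I \<rho> (subst \<sigma> t) = eval_trm I (\<lambda>i. eval_trm I \<rho> (\<sigma> i)) t"
  by (induction t) (simp_all cong: map_cong)

lemma wf_subst: "wf ar t \<Longrightarrow> (\<And>i. wf ar (\<sigma> i)) \<Longrightarrow> wf ar (subst \<sigma> t)"
  by (induction t) auto

lemma eval_trm_cong: "\<forall>i\<in>vars t. \<rho> i = \<rho>' i \<Longrightarrow> eval_trm I \<rho> t = eval_trm I \<rho>' t"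
  by (induction t) (simp_all cong: map_cong)

lemma eval_trm_closed:
  "closed_under ar I U \<Longrightarrow> wf ar t \<Longrightarrow> \<forall>i\<in>vars t. \<rho> i \<in> U \<Longrightarrow> eval_trm I \<rho> t \<in> U"
proof (induction t)
  case (F f ts)
  then have "set (map (eval_trm I \<rho>) ts) \<subseteq> U" by auto
  with F.prems show ?case by (simp add: closed_under_def)
qed simp

lemma deriv_eq_theory_iff:
  assumes "closed_under ar I U"
  shows "deriv ar (eq_theory ar I U) s t \<longleftrightarrow> (s, t) \<in> eq_theory ar I U"
proof
  show "deriv ar (eq_theory ar I U) s t \<Longrightarrow> (s, t) \<in> eq_theory ar I U"
  proof (induction rule: deriv.induct)
    case (cong ss f ts)
    have "list_all2 (\<lambda>s t. (s, t) \<in> eq_theory ar I U) ss ts"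
      using cong(2) by (rule list_all2_mono) simp
    then have "(\<forall>t\<in>set ss. wf ar t) \<and> (\<forall>t\<in>set ts. wf ar t) \<and>
        (\<forall>\<rho>. (\<forall>i. \<rho> i \<in> U) \<longrightarrow> map (eval_trm I \<rho>) ss = map (eval_trm I \<rho>) ts)"
      by (induction rule: list_all2_induct) (auto simp: eq_theory_def)
    then show ?case
      using cong(1) list_all2_lengthD[OF cong(2)] by (auto simp: eq_theory_def)
  next
    case (inst s t \<sigma>)
    then show ?case
      using eval_trm_closed[OF assms] by (auto simp: eq_theory_def eval_trm_subst intro!: wf_subst)
  qed (auto simp: eq_theory_def)
qed (rule deriv.ax)

lemma variety_eq_theory: "variety ar (eq_theory ar I U)"
  by (auto simp: variety_def eq_theory_def)

lemma locally_finite_eq_theory: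
  assumes closed: "closed_under ar I U" and "finite U"
  shows "locally_finite ar (eq_theory ar I U)"
  unfolding locally_finite_def
proof
  fix k
  define W where "W = {t. wf ar t \<and> vars t \<subseteq> {..<k}}"
  define r where "r = {(s, t). deriv ar (eq_theory ar I U) s t}"
  define term_fun where "term_fun s = (\<lambda>\<sigma> \<in> {..<k} \<rightarrow>\<^sub>E U. eval_trm I \<sigma> s)" for s
  define cls where "cls g = {t. wf ar t \<and> (\<forall>\<rho>. (\<forall>i. \<rho> i \<in> U) \<longrightarrow>
      eval_trm I \<rho> t = g (restrict \<rho> {..<k}))}" for g
  have "term_fun s \<in> ({..<k} \<rightarrow>\<^sub>E U) \<rightarrow>\<^sub>E U" if "s \<in> W" for s
    using that eval_trm_closed[OF closed] by (auto simp: term_fun_def W_def PiE_iff subset_iff)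
  then have "term_fun ` W \<subseteq> ({..<k} \<rightarrow>\<^sub>E U) \<rightarrow>\<^sub>E U"
    by blast
  then have "finite (term_fun ` W)"
    by (rule finite_subset) (simp add: finite_PiE \<open>finite U\<close>)
  moreover have "r `` {s} = cls (term_fun s)" if "s \<in> W" for s
  proof -
    have "eval_trm I \<rho> s = term_fun s (restrict \<rho> {..<k})" if "\<forall>i. \<rho> i \<in> U" for \<rho>
      using \<open>s \<in> W\<close> that by (auto simp: term_fun_def W_def intro!: eval_trm_cong)
    then show ?thesis
      using \<open>s \<in> W\<close> unfolding r_def deriv_eq_theory_iff[OF closed]
      by (auto simp: cls_def W_def eq_theory_def)
  qed
  then have "W // r = cls ` term_fun ` W"
    by (auto simp: quotient_def image_image)
  ultimately show "finite ({t. wf ar t \<and> vars t \<subseteq> {..<k}} // {(s, t). deriv ar (eq_theory ar I U) s t})"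
    by (simp add: W_def r_def)
qed

(* A relation is a predicate on tuples indexed by coordinates j; operations act coordinatewise. *)
definition preserves :: "(nat \<Rightarrow> nat) \<Rightarrow> (nat \<Rightarrow> 'a list \<Rightarrow> 'a) \<Rightarrow> ((nat \<Rightarrow> 'a) \<Rightarrow> bool) \<Rightarrow> bool" where
  "preserves ar I Q \<longleftrightarrow>
     (\<forall>f xs. length xs = ar f \<longrightarrow> (\<forall>x\<in>set xs. Q x) \<longrightarrow> Q (\<lambda>j. I f (map (\<lambda>x. x j) xs)))"

lemma preserves_eval_trm:
  assumes "preserves ar I Q" "wf ar t" "\<And>i. Q (\<lambda>j. \<rho> j i)"
  shows "Q (\<lambda>j. eval_trm I (\<rho> j) t)"
  using assms(2)
proof (induction t)
  case (F f ts)
  let ?args = "map (\<lambda>t j. eval_trm I (\<rho> j) t) ts"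
  have "length ?args = ar f" "\<forall>x\<in>set ?args. Q x"
    using F by auto
  then have "Q (\<lambda>j. I f (map (\<lambda>x. x j) ?args))"
    using assms(1) unfolding preserves_def by blast
  then show ?case by (simp add: comp_def)
qed (simp add: assms(3))

(* Variables other than 0, 1, 2 are sent to x, so a triple of tuples from a relation
   assigns a tuple of that relation to every variable. *)
definition triple :: "'a \<Rightarrow> 'a \<Rightarrow> 'a \<Rightarrow> nat \<Rightarrow> 'a" where
  "triple x y z i = (if i = 1 then y else if i = 2 then z else x)"

lemma triple_simps [simp]:
  "triple x y z 0 = x" "triple x y z 1 = y" "triple x y z (Suc 0) = y" "triple x y z 2 = z"
  by (simp_all add: triple_def)

lemma triple_in: "triple x y z i \<in> {x, y, z}"
  by (simp add: triple_def)

lemma eval_trm_app3: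
  "ternary ar t \<Longrightarrow>
   eval_trm I \<rho> (app3 t a b c) = eval_trm I (triple (eval_trm I \<rho> a) (eval_trm I \<rho> b) (eval_trm I \<rho> c)) t"
  unfolding app3_def eval_trm_subst by (rule eval_trm_cong) (auto simp: ternary_def triple_def)

lemma wf_app3: "wf ar t \<Longrightarrow> wf ar a \<Longrightarrow> wf ar b \<Longrightarrow> wf ar c \<Longrightarrow> wf ar (app3 t a b c)"
  unfolding app3_def by (rule wf_subst) auto

lemma preserves_triple:
  assumes "preserves ar I Q" "wf ar t" "Q X" "Q Y" "Q Z"
  shows "Q (\<lambda>j. eval_trm I (triple (X j) (Y j) (Z j)) t)"
proof (rule preserves_eval_trm[OF assms(1,2)])
  fix i
  have "(\<lambda>j. triple (X j) (Y j) (Z j) i) = triple X Y Z i"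
    by (auto simp: triple_def)
  then show "Q (\<lambda>j. triple (X j) (Y j) (Z j) i)"
    using triple_in[of X Y Z i] assms(3-5) by auto
qed

lemma le_add_of_unit_increments:
  fixes f :: "nat \<Rightarrow> nat"
  assumes "k \<le> m" "\<And>i. k \<le> i \<Longrightarrow> i < m \<Longrightarrow> f (Suc i) \<le> f i + 1"
  shows "f m \<le> f k + (m - k)"
  using assms(1)
proof (induction m rule: dec_induct)
  case (step i)
  then show ?case using assms(2)[of i] by simp
qed simp

definition adjacent :: "nat \<Rightarrow> nat \<Rightarrow> bool" where
  "adjacent a b \<longleftrightarrow> a \<le> b + 1 \<and> b \<le> a + 1"

(* Move from x towards z, stopping at level k when going up and at level N - k when
   going down: k = 0 stays at x, k >= N reaches z. *)
definition toward :: "nat \<Rightarrow> nat \<Rightarrow> nat \<Rightarrow> nat \<Rightarrow> nat" where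
  "toward N k x z = (if x \<le> z then max x (min z k) else min x (max z (N - k)))"

definition chain_op :: "nat \<Rightarrow> nat \<Rightarrow> nat \<Rightarrow> nat \<Rightarrow> nat \<Rightarrow> nat \<Rightarrow> nat" where
  "chain_op N a b x y z = (if x = z then x else toward N (if y = z then a else b) x z)"

definition chain_alg :: "nat \<Rightarrow> (nat \<Rightarrow> nat) \<Rightarrow> (nat \<Rightarrow> nat) \<Rightarrow> nat \<Rightarrow> nat list \<Rightarrow> nat" where
  "chain_alg N A B f xs = chain_op N (A f) (B f) (xs ! 0) (xs ! 1) (xs ! 2)"

abbreviation ar3 :: "nat \<Rightarrow> nat" where
  "ar3 \<equiv> \<lambda>_. 3"

lemma toward_le: "x \<le> N \<Longrightarrow> z \<le> N \<Longrightarrow> toward N k x z \<le> N"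
  by (auto simp: toward_def)

lemma toward_same [simp]: "toward N k x x = x"
  by (simp add: toward_def)

lemma toward_0: "x \<le> N \<Longrightarrow> toward N 0 x z = x"
  by (auto simp: toward_def)

lemma toward_top: "z \<le> N \<Longrightarrow> N \<le> k \<Longrightarrow> toward N k x z = z"
  by (auto simp: toward_def)

lemma toward_eq_0:
  "toward N k x z = 0 \<Longrightarrow> (x = 0 \<and> z = 0) \<or> (x = 0 \<and> k = 0) \<or> (z = 0 \<and> N \<le> k)"
  by (auto simp: toward_def split: if_splits)

lemma toward_rise:
  "adjacent k k' \<Longrightarrow> x \<le> x' + 1 \<Longrightarrow> z \<le> z' + 1 \<Longrightarrow> x \<le> N \<Longrightarrow> x' \<le> N \<Longrightarrow> z \<le> N \<Longrightarrow> z' \<le> N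
   \<Longrightarrow> toward N k x z \<le> toward N k' x' z' + 1"
  by (auto simp: adjacent_def toward_def)

lemma toward_adjacent:
  "adjacent k k' \<Longrightarrow> adjacent x x' \<Longrightarrow> adjacent z z' \<Longrightarrow> x \<le> N \<Longrightarrow> x' \<le> N \<Longrightarrow> z \<le> N \<Longrightarrow> z' \<le> N
   \<Longrightarrow> adjacent (toward N k x z) (toward N k' x' z')"
  by (auto simp: adjacent_def toward_def)

lemma toward_adjacent_bottom:
  "k \<le> 1 \<Longrightarrow> k' \<le> 1 \<Longrightarrow> adjacent x x' \<Longrightarrow> x \<le> N \<Longrightarrow> x' \<le> N \<Longrightarrow> z \<le> N \<Longrightarrow> z' \<le> N
   \<Longrightarrow> adjacent (toward N k x z) (toward N k' x' z')"
  by (auto simp: adjacent_def toward_def)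

lemma toward_adjacent_top:
  "N \<le> k + 1 \<Longrightarrow> N \<le> k' + 1 \<Longrightarrow> adjacent z z' \<Longrightarrow> x \<le> N \<Longrightarrow> x' \<le> N \<Longrightarrow> z \<le> N \<Longrightarrow> z' \<le> N
   \<Longrightarrow> adjacent (toward N k x z) (toward N k' x' z')"
  by (auto simp: adjacent_def toward_def)

lemma chain_op_eq_toward: "chain_op N a b x y z = toward N (if y = z then a else b) x z"
  by (simp add: chain_op_def toward_def)

lemma chain_op_xyx [simp]: "chain_op N a b x y x = x"
  by (simp add: chain_op_def)

lemma length_eq_3_conv: "length xs = 3 \<longleftrightarrow> (\<exists>x y z. xs = [x, y, z])"
  by (auto simp: numeral_3_eq_3 length_Suc_conv)

lemma closed_under_chain_alg: "closed_under ar3 (chain_alg N A B) {..N}"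
  unfolding closed_under_def
proof (intro allI impI)
  fix f and xs :: "nat list"
  assume "length xs = ar3 f" "set xs \<subseteq> {..N}"
  then obtain x y z where "xs = [x, y, z]" "x \<le> N" "z \<le> N"
    by (auto simp: length_eq_3_conv)
  then show "chain_alg N A B f xs \<in> {..N}"
    by (simp add: chain_alg_def chain_op_eq_toward toward_le)
qed

lemma chain_op_rise:
  assumes "adjacent a b" "x \<le> x' + 1" "z \<le> z' + 1" "x \<le> N" "x' \<le> N" "z \<le> N" "z' \<le> N"
  shows "chain_op N a b x y z \<le> chain_op N a b x' y' z' + 1"
proof -
  have "adjacent (if y = z then a else b) (if y' = z' then a else b)"
    using assms(1) by (auto simp: adjacent_def)
  then show ?thesis
    unfolding chain_op_eq_toward using assms(2-) by (rule toward_rise)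
qed

lemma chain_op_zero_adjacent:
  assumes "adjacent a b" and zero: "chain_op N a b x y z = 0"
    and "x = 0 \<Longrightarrow> adjacent x1 x2" "z = 0 \<Longrightarrow> adjacent z1 z2"
    and "x1 \<le> N" "x2 \<le> N" "z1 \<le> N" "z2 \<le> N"
  shows "adjacent (chain_op N a b x1 y1 z1) (chain_op N a b x2 y2 z2)"
proof -
  define k where "k = (if y = z then a else b)"
  define k1 where "k1 = (if y1 = z1 then a else b)"
  define k2 where "k2 = (if y2 = z2 then a else b)"
  have "adjacent k1 k2"
    using assms(1) by (auto simp: adjacent_def k1_def k2_def)
  have "toward N k x z = 0"
    using zero by (simp add: chain_op_eq_toward k_def)
  then consider "x = 0" "z = 0" | "x = 0" "k = 0" | "z = 0" "N \<le> k"
    using toward_eq_0 by blast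
  then have "adjacent (toward N k1 x1 z1) (toward N k2 x2 z2)"
  proof cases
    case 1
    then show ?thesis using assms(3-) \<open>adjacent k1 k2\<close> by (intro toward_adjacent) auto
  next
    case 2
    then have "k1 \<le> 1" "k2 \<le> 1"
      using assms(1) by (auto simp: adjacent_def k_def k1_def k2_def split: if_splits)
    then show ?thesis using 2 assms(3-) by (intro toward_adjacent_bottom) auto
  next
    case 3
    then have "N \<le> k1 + 1" "N \<le> k2 + 1"
      using assms(1) by (auto simp: adjacent_def k_def k1_def k2_def split: if_splits)
    then show ?thesis using 3 assms(3-) by (intro toward_adjacent_top) auto
  qed
  then show ?thesis
    by (simp add: chain_op_eq_toward k1_def k2_def)
qed

definition zero_adjacent_rel :: "nat \<Rightarrow> (nat \<Rightarrow> nat) \<Rightarrow> bool" where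
  "zero_adjacent_rel N g \<longleftrightarrow> g 0 \<le> N \<and> g 1 \<le> N \<and> g 2 \<le> N \<and> (g 0 = 0 \<longrightarrow> adjacent (g 1) (g 2))"

definition rise_rel :: "nat \<Rightarrow> (nat \<Rightarrow> nat) \<Rightarrow> bool" where
  "rise_rel N g \<longleftrightarrow> g 0 \<le> N \<and> g 1 \<le> N \<and> g 1 \<le> g 0 + 1"

lemma preserves_zero_adjacent_rel:
  assumes "\<And>f. adjacent (A f) (B f)"
  shows "preserves ar3 (chain_alg N A B) (zero_adjacent_rel N)"
  unfolding preserves_def
proof (intro allI impI)
  fix f and xs :: "(nat \<Rightarrow> nat) list"
  assume "length xs = ar3 f" "\<forall>x\<in>set xs. zero_adjacent_rel N x"
  then obtain x y z where xs: "xs = [x, y, z]" and rel: "zero_adjacent_rel N x" "zero_adjacent_rel N z"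
    by (auto simp: length_eq_3_conv)
  let ?op = "chain_op N (A f) (B f)"
  have "?op (x 0) (y 0) (z 0) = 0 \<Longrightarrow> adjacent (?op (x 1) (y 1) (z 1)) (?op (x 2) (y 2) (z 2))"
    using rel by (intro chain_op_zero_adjacent[OF assms]) (auto simp: zero_adjacent_rel_def)
  moreover have "?op (x i) (y i) (z i) \<le> N" if "i \<le> 2" for i
    using rel that by (auto simp: chain_op_eq_toward zero_adjacent_rel_def le_Suc_eq numeral_2_eq_2
        intro!: toward_le)
  ultimately show "zero_adjacent_rel N (\<lambda>j. chain_alg N A B f (map (\<lambda>x. x j) xs))"
    by (simp add: xs chain_alg_def zero_adjacent_rel_def)
qed

lemma preserves_rise_rel:
  assumes "\<And>f. adjacent (A f) (B f)"
  shows "preserves ar3 (chain_alg N A B) (rise_rel N)"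
  unfolding preserves_def
proof (intro allI impI)
  fix f and xs :: "(nat \<Rightarrow> nat) list"
  assume "length xs = ar3 f" "\<forall>x\<in>set xs. rise_rel N x"
  then obtain x y z where xs: "xs = [x, y, z]" and rel: "rise_rel N x" "rise_rel N z"
    by (auto simp: length_eq_3_conv)
  let ?op = "chain_op N (A f) (B f)"
  have "?op (x 1) (y 1) (z 1) \<le> ?op (x 0) (y 0) (z 0) + 1"
    using rel by (intro chain_op_rise[OF assms]) (auto simp: rise_rel_def)
  moreover have "?op (x i) (y i) (z i) \<le> N" if "i \<le> 1" for i
    using rel that by (auto simp: chain_op_eq_toward rise_rel_def le_Suc_eq intro!: toward_le)
  ultimately show "rise_rel N (\<lambda>j. chain_alg N A B f (map (\<lambda>x. x j) xs))"
    by (simp add: xs chain_alg_def rise_rel_def)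
qed

definition basic_trm :: "nat \<Rightarrow> trm" where
  "basic_trm f = F f [vx, vy, vz]"

lemma ternary_basic_trm: "ternary ar3 (basic_trm f)"
  by (auto simp: ternary_def basic_trm_def)

locale chain_algebra =
  fixes N :: nat and A B :: "nat \<Rightarrow> nat"
begin

abbreviation alg :: "nat \<Rightarrow> nat list \<Rightarrow> nat" where
  "alg \<equiv> chain_alg N A B"

abbreviation Th :: "(trm \<times> trm) set" where
  "Th \<equiv> eq_theory ar3 alg {..N}"

lemma variety_locally_finite: "variety ar3 Th \<and> locally_finite ar3 Th"
  using variety_eq_theory locally_finite_eq_theory[OF closed_under_chain_alg] by blast

lemma deriv_ThI:
  assumes "wf ar3 s" "wf ar3 t" "\<And>\<rho>. \<forall>i. \<rho> i \<le> N \<Longrightarrow> eval_trm alg \<rho> s = eval_trm alg \<rho> t"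
  shows "deriv ar3 Th s t"
  using assms by (intro deriv.ax) (auto simp: eq_theory_def)

lemma eval_app3_basic_trm [simp]:
  "eval_trm alg \<rho> (app3 (basic_trm f) a b c)
   = chain_op N (A f) (B f) (eval_trm alg \<rho> a) (eval_trm alg \<rho> b) (eval_trm alg \<rho> c)"
  by (simp add: eval_trm_app3[OF ternary_basic_trm]) (simp add: basic_trm_def chain_alg_def)

lemma wf_app3_basic_trm [simp]: "wf ar3 (app3 (basic_trm f) (V i) (V j) (V k))"
  using ternary_basic_trm by (auto simp: ternary_def intro: wf_app3)

lemma directed_distributive_basic_trm:
  assumes "A 0 = 0" "B 0 = 0" "N \<le> A (Suc N)" "N \<le> B (Suc N)" "\<And>h. B (Suc h) = A h"
  shows "directed_distributive ar3 Th (Suc N)"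
  unfolding directed_distributive_def
proof (intro exI[of _ basic_trm] conjI allI impI)
  show "ternary ar3 (basic_trm h)" for h
    by (rule ternary_basic_trm)
  show "deriv ar3 Th (app3 (basic_trm 0) vx vy vz) vx"
    by (rule deriv_ThI) (simp_all add: chain_op_eq_toward toward_0 assms)
  show "deriv ar3 Th (app3 (basic_trm (Suc N)) vx vy vz) vz"
    by (rule deriv_ThI) (simp_all add: chain_op_eq_toward toward_top assms(3,4))
  show "deriv ar3 Th (app3 (basic_trm h) vx vy vx) vx" for h
    by (rule deriv_ThI) simp_all
  show "deriv ar3 Th (app3 (basic_trm h) vx vz vz) (app3 (basic_trm (Suc h)) vx vx vz)" for h
    by (rule deriv_ThI) (simp_all add: chain_op_eq_toward assms)
qed

lemma gumm_basic_trm: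
  assumes "A 0 = 0" "B 0 = 0" "N \<le> A (Suc N)" "N \<le> B (Suc N)"
    "\<And>h. even h \<Longrightarrow> A (Suc h) = A h" "\<And>h. odd h \<Longrightarrow> B (Suc h) = B h"
  shows "gumm ar3 Th (Suc N)"
  unfolding gumm_def
proof (intro exI[of _ basic_trm] conjI allI impI)
  show "ternary ar3 (basic_trm h)" for h
    by (rule ternary_basic_trm)
  show "deriv ar3 Th (app3 (basic_trm 0) vx vy vz) vx"
    by (rule deriv_ThI) (simp_all add: chain_op_eq_toward toward_0 assms)
  show "deriv ar3 Th (app3 (basic_trm (Suc N)) vx vy vz) vz"
    by (rule deriv_ThI) (simp_all add: chain_op_eq_toward toward_top assms(3,4))
  show "deriv ar3 Th (app3 (basic_trm h) vx vy vx) vx" for h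
    by (rule deriv_ThI) simp_all
  show "deriv ar3 Th (app3 (basic_trm h) vx vz vz) (app3 (basic_trm (Suc h)) vx vz vz)"
    if "h < Suc N" "even h" for h
    by (rule deriv_ThI) (simp_all add: chain_op_eq_toward assms that)
  show "deriv ar3 Th (app3 (basic_trm h) vx vx vz) (app3 (basic_trm (Suc h)) vx vx vz)"
    if "h < Suc N" "odd h" for h
    by (rule deriv_ThI) (simp_all add: chain_op_eq_toward assms that)
qed

lemma directed_alvin_heads_basic_trm:
  assumes "3 \<le> N" "A 0 = 0" "B 2 = B 0" "\<And>h. 2 \<le> h \<Longrightarrow> h < N - 1 \<Longrightarrow> B (Suc h) = A h"
    "A N = A (N - 1)" "N \<le> B N"
  shows "directed_alvin_heads ar3 Th (Suc N)"
proof -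
  have "two_headed_gumm_terms ar3 Th (Suc N) (basic_trm 0) basic_trm (basic_trm N)"
    unfolding two_headed_gumm_terms_def
  proof (intro conjI allI impI)
    show "ternary ar3 (basic_trm 0)" "ternary ar3 (basic_trm N)" "ternary ar3 (basic_trm h)" for h
      by (rule ternary_basic_trm)+
    show "deriv ar3 Th (app3 (basic_trm h) vx vy vx) vx" for h
      by (rule deriv_ThI) simp_all
    show "deriv ar3 Th (app3 (basic_trm 0) vx vz vz) vx"
      by (rule deriv_ThI) (simp_all add: chain_op_eq_toward toward_0 assms)
    show "deriv ar3 Th (app3 (basic_trm 0) vx vx vz) (app3 (basic_trm 2) vx vx vz)"
      by (rule deriv_ThI) (simp_all add: chain_op_eq_toward assms)
    show "deriv ar3 Th (app3 (basic_trm h) vx vz vz) (app3 (basic_trm (Suc h)) vx vx vz)"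
      if "2 \<le> h \<and> h < Suc N - 2" for h
      using that by (intro deriv_ThI) (simp_all add: chain_op_eq_toward assms)
    show "deriv ar3 Th (app3 (basic_trm (Suc N - 2)) vx vz vz) (app3 (basic_trm N) vx vz vz)"
      using assms(1) by (intro deriv_ThI) (simp_all add: chain_op_eq_toward assms Suc_diff_Suc numeral_2_eq_2)
    show "deriv ar3 Th (app3 (basic_trm N) vx vx vz) vz"
      by (rule deriv_ThI) (simp_all add: chain_op_eq_toward toward_top assms)
  qed
  moreover have "deriv ar3 Th (app3 (basic_trm f) vx vy vx) vx" for f
    by (rule deriv_ThI) simp_all
  ultimately show ?thesis
    using assms(1) unfolding directed_alvin_heads_def by auto
qed

definition term_op :: "trm \<Rightarrow> nat \<Rightarrow> nat \<Rightarrow> nat \<Rightarrow> nat" where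
  "term_op t x y z = eval_trm alg (triple x y z) t"

lemma term_op_app3 [simp]:
  "ternary ar3 t \<Longrightarrow>
   term_op (app3 t a b c) x y z = term_op t (term_op a x y z) (term_op b x y z) (term_op c x y z)"
  by (simp add: term_op_def eval_trm_app3)

lemma term_op_V [simp]: "term_op (V i) x y z = triple x y z i"
  by (simp add: term_op_def)

lemma term_op_identity:
  assumes "deriv ar3 Th s t" "x \<le> N" "y \<le> N" "z \<le> N"
  shows "term_op s x y z = term_op t x y z"
proof -
  have "\<forall>i. triple x y z i \<le> N"
    using assms(2-4) by (simp add: triple_def)
  then show ?thesis
    using assms(1) unfolding deriv_eq_theory_iff[OF closed_under_chain_alg]
    by (auto simp: term_op_def eq_theory_def)
qed

end

locale adjacent_chain_algebra = chain_algebra +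
  assumes adjacent_params: "\<And>f. adjacent (A f) (B f)"
begin

(* The columns (0,0), (N,0), (N,N) of the two assignments (0,N,N) and (0,0,N) lie in rise_rel. *)
lemma term_op_rise:
  assumes "wf ar3 t"
  shows "term_op t 0 0 N \<le> term_op t 0 N N + 1"
proof -
  have "rise_rel N (\<lambda>j. eval_trm alg (triple (triple 0 0 0 j) (triple N 0 0 j) (triple N N 0 j)) t)"
    by (rule preserves_triple[OF preserves_rise_rel[OF adjacent_params] assms]) (simp_all add: rise_rel_def)
  then show ?thesis
    by (simp add: rise_rel_def term_op_def)
qed

(* The columns (0,0,0), (N,0,N), (0,N,N) of the assignments (0,N,0), (0,0,N), (0,N,N)
   lie in zero_adjacent_rel. *)
lemma term_op_absorbing:
  assumes "ternary ar3 t" "deriv ar3 Th (app3 t vx vy vx) vx"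
  shows "term_op t 0 N N \<le> term_op t 0 0 N + 1"
proof -
  have "zero_adjacent_rel N
      (\<lambda>j. eval_trm alg (triple (triple 0 0 0 j) (triple N 0 N j) (triple 0 N N j)) t)"
    using assms(1) unfolding ternary_def
    by (intro preserves_triple[OF preserves_zero_adjacent_rel[OF adjacent_params]])
      (simp_all add: zero_adjacent_rel_def adjacent_def)
  moreover have "term_op t 0 N 0 = 0"
    using term_op_identity[OF assms(2), of 0 N 0] assms(1) by simp
  ultimately show ?thesis
    by (simp add: zero_adjacent_rel_def adjacent_def term_op_def)
qed

lemma not_directed_distributive:
  assumes "0 < N"
  shows "\<not> directed_distributive ar3 Th N"
proof
  assume "directed_distributive ar3 Th N"
  then obtain t where tern: "\<And>h. h \<le> N \<Longrightarrow> ternary ar3 (t h)"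
    and first: "deriv ar3 Th (app3 (t 0) vx vy vz) vx"
    and last: "deriv ar3 Th (app3 (t N) vx vy vz) vz"
    and absorb: "\<And>h. h \<le> N \<Longrightarrow> deriv ar3 Th (app3 (t h) vx vy vx) vx"
    and step: "\<And>h. h < N \<Longrightarrow> deriv ar3 Th (app3 (t h) vx vz vz) (app3 (t (Suc h)) vx vx vz)"
    unfolding directed_distributive_def by auto
  define g where "g h = term_op (t h) 0 0 N" for h
  have step_val: "g (Suc h) = term_op (t h) 0 N N" if "h < N" for h
    using term_op_identity[OF step[OF that], of 0 0 N] tern that by (simp add: g_def)
  have "g (Suc h) \<le> g h + 1" if "h < N" for h
    using step_val[OF that] term_op_absorbing[OF tern absorb] that by (simp add: g_def)
  then have "g N \<le> g 1 + (N - 1)"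
    using assms by (intro le_add_of_unit_increments) auto
  moreover have "g 1 = 0"
    using step_val[of 0] term_op_identity[OF first, of 0 N N] tern assms by simp
  moreover have "g N = N"
    using term_op_identity[OF last, of 0 0 N] tern by (simp add: g_def)
  ultimately show False
    using assms by simp
qed

lemma not_gumm:
  assumes "0 < N"
  shows "\<not> gumm ar3 Th N"
proof
  assume "gumm ar3 Th N"
  then obtain t where tern: "\<And>h. h \<le> N \<Longrightarrow> ternary ar3 (t h)"
    and first: "deriv ar3 Th (app3 (t 0) vx vy vz) vx"
    and last: "deriv ar3 Th (app3 (t N) vx vy vz) vz"
    and absorb: "\<And>h. 2 \<le> h \<Longrightarrow> h \<le> N \<Longrightarrow> deriv ar3 Th (app3 (t h) vx vy vx) vx"
    and even_step: "\<And>h. h < N \<Longrightarrow> even h \<Longrightarrow>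
      deriv ar3 Th (app3 (t h) vx vz vz) (app3 (t (Suc h)) vx vz vz)"
    and odd_step: "\<And>h. h < N \<Longrightarrow> odd h \<Longrightarrow>
      deriv ar3 Th (app3 (t h) vx vx vz) (app3 (t (Suc h)) vx vx vz)"
    unfolding gumm_def by auto
  define g where "g h = (if odd h then term_op (t h) 0 N N else term_op (t h) 0 0 N)" for h
  have even_val: "term_op (t (Suc h)) 0 N N = term_op (t h) 0 N N" if "h < N" "even h" for h
    using term_op_identity[OF even_step[OF that], of 0 N N] tern that by simp
  have odd_val: "term_op (t (Suc h)) 0 0 N = term_op (t h) 0 0 N" if "h < N" "odd h" for h
    using term_op_identity[OF odd_step[OF that], of 0 0 N] tern that by simp
  have "g (Suc h) \<le> g h + 1" if "1 \<le> h" "h < N" for h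
  proof (cases "odd h")
    case True
    then show ?thesis
      using odd_val[OF \<open>h < N\<close>] term_op_rise[of "t h"] tern[of h] that
      by (simp add: g_def ternary_def)
  next
    case False
    then have "2 \<le> h"
      using that by presburger
    then show ?thesis
      using False even_val[OF \<open>h < N\<close>] term_op_absorbing[OF tern absorb] that by (simp add: g_def)
  qed
  then have "g N \<le> g 1 + (N - 1)"
    using assms by (intro le_add_of_unit_increments) auto
  moreover have "g 1 = 0"
    using even_val[of 0] term_op_identity[OF first, of 0 N N] tern assms by (simp add: g_def)
  moreover have "g N = N"
    using term_op_identity[OF last, of 0 N N] term_op_identity[OF last, of 0 0 N] tern by (simp add: g_def)
  ultimately show False
    using assms by simp
qed

lemma not_two_headed_directed_gumm: "\<not> two_headed_directed_gumm ar3 Th N"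
proof
  assume "two_headed_directed_gumm ar3 Th N"
  then obtain p t q where "4 \<le> N" and tern: "ternary ar3 p" "ternary ar3 q"
      "\<And>h. 2 \<le> h \<Longrightarrow> h \<le> N - 2 \<Longrightarrow> ternary ar3 (t h)"
    and absorb: "\<And>h. 2 \<le> h \<Longrightarrow> h \<le> N - 2 \<Longrightarrow> deriv ar3 Th (app3 (t h) vx vy vx) vx"
    and p_first: "deriv ar3 Th (app3 p vx vz vz) vx"
    and p_next: "deriv ar3 Th (app3 p vx vx vz) (app3 (t 2) vx vx vz)"
    and step: "\<And>h. 2 \<le> h \<Longrightarrow> h < N - 2 \<Longrightarrow>
      deriv ar3 Th (app3 (t h) vx vz vz) (app3 (t (Suc h)) vx vx vz)"
    and q_prev: "deriv ar3 Th (app3 (t (N - 2)) vx vz vz) (app3 q vx vz vz)"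
    and q_last: "deriv ar3 Th (app3 q vx vx vz) vz"
    unfolding two_headed_directed_gumm_def two_headed_gumm_terms_def by blast
  define g where "g h = term_op (t h) 0 0 N" for h
  have absorbed: "term_op (t h) 0 N N \<le> g h + 1" if "2 \<le> h" "h \<le> N - 2" for h
    using term_op_absorbing[OF tern(3) absorb, OF that that] by (simp add: g_def)
  have "g (Suc h) \<le> g h + 1" if "2 \<le> h" "h < N - 2" for h
    using term_op_identity[OF step[OF that], of 0 0 N] absorbed[of h] tern(3) that by (simp add: g_def)
  then have "g (N - 2) \<le> g 2 + (N - 2 - 2)"
    using \<open>4 \<le> N\<close> by (intro le_add_of_unit_increments) auto
  moreover have "g 2 \<le> 1"
    using term_op_identity[OF p_next, of 0 0 N] term_op_identity[OF p_first, of 0 N N]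
      term_op_rise[of p] tern \<open>4 \<le> N\<close> by (simp add: g_def ternary_def)
  moreover have "term_op (t (N - 2)) 0 N N \<le> g (N - 2) + 1"
    using absorbed \<open>4 \<le> N\<close> by simp
  moreover have "N \<le> term_op (t (N - 2)) 0 N N + 1"
    using term_op_identity[OF q_prev, of 0 N N] term_op_identity[OF q_last, of 0 0 N]
      term_op_rise[of q] tern \<open>4 \<le> N\<close> by (simp add: ternary_def)
  ultimately show False
    using \<open>4 \<le> N\<close> by simp
qed

end

lemma two_headed_directed_gumm_if_alvin_heads:
  "directed_alvin_heads ar \<Sigma> k \<Longrightarrow> two_headed_directed_gumm ar \<Sigma> k"
  by (auto simp: directed_alvin_heads_def two_headed_directed_gumm_def)

lemma gumm_separation:
  assumes "2 \<le> n"
  shows "\<exists>ar \<Sigma>. variety ar \<Sigma> \<and> locally_finite ar \<Sigma> \<and> gumm ar \<Sigma> n \<and> \<not> gumm ar \<Sigma> (n - 1)"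
proof -
  define A where "A h = (if even h then h else h - 1)" for h :: nat
  define B where "B h = (if odd h then h else h - 1)" for h :: nat
  interpret adjacent_chain_algebra "n - 1" A B
    by unfold_locales (auto simp: adjacent_def A_def B_def)
  have "gumm ar3 Th (Suc (n - 1))"
    by (rule gumm_basic_trm) (auto simp: A_def B_def)
  then show ?thesis
    using variety_locally_finite not_gumm assms by auto
qed

lemma directed_distributive_separation:
  assumes "2 \<le> n"
  shows "\<exists>ar \<Sigma>. variety ar \<Sigma> \<and> locally_finite ar \<Sigma> \<and>
    directed_distributive ar \<Sigma> n \<and> \<not> directed_distributive ar \<Sigma> (n - 1)"
proof -
  interpret adjacent_chain_algebra "n - 1" "\<lambda>h. h" "\<lambda>h. h - 1"
    by unfold_locales (auto simp: adjacent_def)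
  have "directed_distributive ar3 Th (Suc (n - 1))"
    by (rule directed_distributive_basic_trm) auto
  then show ?thesis
    using variety_locally_finite not_directed_distributive assms by auto
qed

lemma alvin_heads_separation:
  assumes "4 \<le> n"
  shows "\<exists>ar \<Sigma>. variety ar \<Sigma> \<and> locally_finite ar \<Sigma> \<and>
    directed_alvin_heads ar \<Sigma> n \<and> two_headed_directed_gumm ar \<Sigma> n \<and>
    \<not> directed_alvin_heads ar \<Sigma> (n - 1) \<and> \<not> two_headed_directed_gumm ar \<Sigma> (n - 1)"
proof -
  define N where "N = n - 1"
  define A where "A h = (if h = N then N - 1 else h)" for h
  define B where "B h = (if h = 0 then 1 else if h = N then N else h - 1)" for h
  interpret adjacent_chain_algebra N A B
    by unfold_locales (auto simp: adjacent_def A_def B_def)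
  have "directed_alvin_heads ar3 Th (Suc N)"
    using assms by (intro directed_alvin_heads_basic_trm) (auto simp: A_def B_def N_def)
  moreover have "Suc N = n"
    using assms by (simp add: N_def)
  ultimately show ?thesis
    using variety_locally_finite not_two_headed_directed_gumm two_headed_directed_gumm_if_alvin_heads
    unfolding N_def by metis
qed

theorem corollary8p11:
  shows "(\<forall>n\<ge>2. \<exists>ar \<Sigma>. variety ar \<Sigma> \<and> locally_finite ar \<Sigma> \<and>
            gumm ar \<Sigma> n \<and> \<not> gumm ar \<Sigma> (n - 1))
       \<and> (\<forall>n\<ge>2. \<exists>ar \<Sigma>. variety ar \<Sigma> \<and> locally_finite ar \<Sigma> \<and>
            directed_distributive ar \<Sigma> n \<and> \<not> directed_distributive ar \<Sigma> (n - 1))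
       \<and> (\<forall>n\<ge>4. \<exists>ar \<Sigma>. variety ar \<Sigma> \<and> locally_finite ar \<Sigma> \<and>
            directed_alvin_heads ar \<Sigma> n \<and> two_headed_directed_gumm ar \<Sigma> n \<and>
            \<not> directed_alvin_heads ar \<Sigma> (n - 1) \<and> \<not> two_headed_directed_gumm ar \<Sigma> (n - 1))"
  using gumm_separation directed_distributive_separation alvin_heads_separation by blast

end
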